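(* Let $p/q$ be an even rational parameter, $\omega=p+q$, and let $\alpha$ be the unique integer in $(0,\omega/2)$ with $2\alpha p\equiv \pm1 \pmod \omega$. For $k=0,1,\dots,(\omega-1)/2$, the lines of $\mathcal V$ of capacity $2k$ are the lines $x=n$ with $n\equiv k\alpha$ or $n\equiv \omega-k\alpha\pmod\omega$, and the lines of $\mathcal H$ of capacity $2k$ are the lines $y=n$ with $n\equiv k\alpha$ or $n\equiv\omega-k\alpha \pmod \omega$. For every odd integer $k$ with $1\le k\le \omega$, the lines of $\mathcal P$ and of $\mathcal Q$ of mass $k$ have $y$-intercept $(0,n)$ with $n\equiv k\alpha$ or $n\equiv \omega-k\alpha\pmod\omega$.
   Context: An even rational parameter is a rational $p/q\in(0,1)$, $p,q$ positive coprime integers, with $pq$ even. Put $\omega=p+q$, $P=2p/\omega$, $Q=2q/\omega$. Families of lines: $\mathcal H$ = horizontal lines $y=n$, $\mathcal V$ = vertical lines $x=n$ ($n\in\mathbb Z$), $\mathcal P$ = lines of slope $-P$ with integer $y$-intercept, $\mathcal Q$ = lines of slope $-Q$ with integer $y$-intercept. Functions mod $2\mathbb Z$, with values represented in $(-1,1]$: $F_H(x,y)=2Py$, $F_V(x,y)=2Px$, $F_P(x,y)=Py+P^2x+1$, $F_Q(x,y)=Py+PQx+1$. Each of these functions is constant on each line of the corresponding family. For a line $L$ in $\mathcal H$ (resp. $\mathcal V$) its capacity is $|\omega F_H(L)|$ (resp. $|\omega F_V(L)|$); for a line $L$ in $\mathcal P$ (resp. $\mathcal Q$) its mass is $|\omega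 F_P(L)|$ (resp. $|\omega F_Q(L)|$). (The number $\tau=\alpha/\omega$ is called the tune, so $k\alpha=k\tau\omega$.) *)

theory Defs
  imports Complex_Main "HOL-Number_Theory.Cong"
begin

definition even_rational_param :: "nat \<Rightarrow> nat \<Rightarrow> bool" where
  "even_rational_param p q \<longleftrightarrow> 0 < p \<and> p < q \<and> coprime p q \<and> even (p * q)"

definition omega :: "nat \<Rightarrow> nat \<Rightarrow> int" where
  "omega p q = int p + int q"

definition PP :: "nat \<Rightarrow> nat \<Rightarrow> real" where
  "PP p q = 2 * real p / real (p + q)"

definition QQ :: "nat \<Rightarrow> nat \<Rightarrow> real" where
  "QQ p q = 2 * real q / real (p + q)"

text \<open>Representative in (-1,1] of a real number modulo 2.\<close>
definition rep2 :: "real \<Rightarrow> real" where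
  "rep2 t = t - 2 * of_int \<lceil>(t - 1) / 2\<rceil>"

definition F_H :: "nat \<Rightarrow> nat \<Rightarrow> real \<Rightarrow> real \<Rightarrow> real" where
  "F_H p q x y = rep2 (2 * PP p q * y)"

definition F_V :: "nat \<Rightarrow> nat \<Rightarrow> real \<Rightarrow> real \<Rightarrow> real" where
  "F_V p q x y = rep2 (2 * PP p q * x)"

definition F_P :: "nat \<Rightarrow> nat \<Rightarrow> real \<Rightarrow> real \<Rightarrow> real" where
  "F_P p q x y = rep2 (PP p q * y + (PP p q)\<^sup>2 * x + 1)"

definition F_Q :: "nat \<Rightarrow> nat \<Rightarrow> real \<Rightarrow> real \<Rightarrow> real" where
  "F_Q p q x y = rep2 (PP p q * y + PP p q * QQ p q * x + 1)"

definition hline :: "int \<Rightarrow> (real \<times> real) set" where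
  "hline n = {(x, y). y = of_int n}"
definition vline :: "int \<Rightarrow> (real \<times> real) set" where
  "vline n = {(x, y). x = of_int n}"
definition pline :: "nat \<Rightarrow> nat \<Rightarrow> int \<Rightarrow> (real \<times> real) set" where
  "pline p q n = {(x, y). y = of_int n - PP p q * x}"
definition qline :: "nat \<Rightarrow> nat \<Rightarrow> int \<Rightarrow> (real \<times> real) set" where
  "qline p q n = {(x, y). y = of_int n - QQ p q * x}"

text \<open>Capacity / mass of a line: |omega * F(z)| for a point z on the line
  (the functions are constant on the lines; we pick a point via SOME).\<close>
definition capacity_H :: "nat \<Rightarrow> nat \<Rightarrow> int \<Rightarrow> real" where
  "capacity_H p q n = (let z = (SOME z. z \<in> hline n) in
     \<bar>of_int (omega p q) * F_H p q (fst z) (snd z)\<bar>)"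
definition capacity_V :: "nat \<Rightarrow> nat \<Rightarrow> int \<Rightarrow> real" where
  "capacity_V p q n = (let z = (SOME z. z \<in> vline n) in
     \<bar>of_int (omega p q) * F_V p q (fst z) (snd z)\<bar>)"
definition mass_P :: "nat \<Rightarrow> nat \<Rightarrow> int \<Rightarrow> real" where
  "mass_P p q n = (let z = (SOME z. z \<in> pline p q n) in
     \<bar>of_int (omega p q) * F_P p q (fst z) (snd z)\<bar>)"
definition mass_Q :: "nat \<Rightarrow> nat \<Rightarrow> int \<Rightarrow> real" where
  "mass_Q p q n = (let z = (SOME z. z \<in> qline p q n) in
     \<bar>of_int (omega p q) * F_Q p q (fst z) (snd z)\<bar>)"

end

theory Submission
  imports Defs
begin

text \<open>
  On a line of \<open>\<V>\<close> or \<open>\<H>\<close> with coordinate \<open>n\<close>, resp. of \<open>\<P>\<close> or \<open>\<Q>\<close> with intercept \<open>n\<close>,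
  the function \<open>F\<close> equals \<open>N/\<omega>\<close> modulo 2, with \<open>N = 4pn\<close> resp. \<open>N = 2pn + \<omega>\<close>. Hence
  \<open>\<omega>F\<close> is the representative of \<open>N\<close> modulo \<open>2\<omega>\<close> in \<open>(-\<omega>, \<omega>]\<close>, and the value
  \<open>\<bar>\<omega>F\<bar> = c\<close> with \<open>0 \<le> c \<le> \<omega>\<close> is attained exactly when \<open>N \<equiv> \<plusminus>c (mod 2\<omega>)\<close>. As \<open>\<omega>\<close>
  is odd, both cases reduce to \<open>2pn \<equiv> \<plusminus>k (mod \<omega>)\<close>, and since \<open>\<alpha>\<close> inverts \<open>2p\<close> up
  to sign modulo \<open>\<omega>\<close>, this is \<open>n \<equiv> \<plusminus>k\<alpha> (mod \<omega>)\<close>.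
\<close>

lemma rep2_bounds: "- 1 < rep2 t" "rep2 t \<le> 1"
  using ceiling_correct[of "(t - 1) / 2"] unfolding rep2_def
  by (simp_all add: field_simps del: le_of_int_ceiling)

lemma rep2_scaled_int:
  fixes N w :: int
  assumes "0 < w"
  obtains m where "of_int w * rep2 (of_int N / of_int w) = of_int m"
    and "- w < m" "m \<le> w" "[m = N] (mod 2 * w)"
proof
  define m where "m = N - 2 * w * \<lceil>(of_int N / of_int w - 1) / 2 :: real\<rceil>"
  show m_eq: "of_int w * rep2 (of_int N / of_int w) = of_int m"
    using assms unfolding m_def rep2_def by (simp add: field_simps)
  have "real_of_int w * - 1 < of_int m" "of_int m \<le> real_of_int w * 1"
    unfolding m_eq[symmetric] using assms rep2_bounds
    by (intro mult_strict_left_mono mult_left_mono; simp)+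
  then show "- w < m" "m \<le> w"
    by linarith+
  show "[m = N] (mod 2 * w)"
    unfolding m_def cong_iff_dvd_diff by simp
qed

lemma cong_half_open_imp_eq:
  fixes a b w :: int
  assumes "- w < a" "a \<le> w" "- w < b" "b \<le> w" "[a = b] (mod 2 * w)"
  shows "a = b"
proof (rule ccontr)
  assume "a \<noteq> b"
  then have "\<bar>2 * w\<bar> \<le> \<bar>a - b\<bar>"
    using assms(5) by (intro dvd_imp_le_int) (simp_all add: cong_iff_dvd_diff)
  then show False
    using assms(1-4) by linarith
qed

definition cong_pm :: "int \<Rightarrow> int \<Rightarrow> int \<Rightarrow> bool" where
  "cong_pm x c m \<longleftrightarrow> [x = c] (mod m) \<or> [x = - c] (mod m)"

lemma abs_cong_half_open_eq_iff:
  fixes m N c w :: int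
  assumes m: "- w < m" "m \<le> w" "[m = N] (mod 2 * w)" and c: "0 \<le> c" "c \<le> w"
  shows "\<bar>m\<bar> = c \<longleftrightarrow> cong_pm N c (2 * w)"
proof
  assume "\<bar>m\<bar> = c"
  then have "m = c \<or> m = - c"
    by linarith
  then show "cong_pm N c (2 * w)"
    using m(3) cong_sym unfolding cong_pm_def by blast
next
  assume "cong_pm N c (2 * w)"
  then have "[m = c] (mod 2 * w) \<or> [m = - c] (mod 2 * w)"
    using m(3) cong_trans unfolding cong_pm_def by blast
  then show "\<bar>m\<bar> = c"
  proof
    assume "[m = c] (mod 2 * w)"
    then show ?thesis
      using cong_half_open_imp_eq[of w m c] m c by simp
  next
    assume mc: "[m = - c] (mod 2 * w)"
    show ?thesis
    proof (cases "c = w")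
      case True
      \<comment> \<open>\<open>-w\<close> lies outside \<open>(-w, w]\<close>, but is congruent to \<open>w\<close>\<close>
      have "[- w = w] (mod 2 * w)"
        by (simp add: cong_iff_dvd_diff)
      with mc True have "[m = w] (mod 2 * w)"
        using cong_trans by blast
      then show ?thesis
        using cong_half_open_imp_eq[of w m w] m c True by simp
    next
      case False
      then show ?thesis
        using cong_half_open_imp_eq[of w m "- c"] mc m c by simp
    qed
  qed
qed

lemma abs_rep2_scaled_eq_iff:
  fixes N c w :: int
  assumes "0 < w" "0 \<le> c" "c \<le> w"
  shows "\<bar>of_int w * rep2 (of_int N / of_int w)\<bar> = of_int c \<longleftrightarrow> cong_pm N c (2 * w)"
proof -
  obtain m where "of_int w * rep2 (of_int N / of_int w) = of_int m"
    and "- w < m" "m \<le> w" "[m = N] (mod 2 * w)"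
    using rep2_scaled_int[OF assms(1)] .
  moreover have "\<bar>real_of_int m\<bar> = of_int c \<longleftrightarrow> \<bar>m\<bar> = c"
    by (metis of_int_abs of_int_eq_iff)
  ultimately show ?thesis
    using abs_cong_half_open_eq_iff[of w m N c] assms by simp
qed

lemma cong_pm_double_iff: "cong_pm (2 * x) (2 * c) (2 * m) \<longleftrightarrow> cong_pm x c m"
  unfolding cong_pm_def cong_iff_dvd_diff
  by (metis mult_minus_right right_diff_distrib dvd_mult_cancel_left zero_neq_numeral)

lemma cong_pm_add_odd_modulus_iff:
  fixes x c w :: int
  assumes "odd w" "odd c"
  shows "cong_pm (2 * x + w) c (2 * w) \<longleftrightarrow> cong_pm (2 * x) c w"
proof -
  have "[2 * x + w = d] (mod 2 * w) \<longleftrightarrow> [2 * x = d] (mod w)" if "odd d" for d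
  proof
    assume "[2 * x + w = d] (mod 2 * w)"
    then have "[2 * x + w = d] (mod w)"
      using cong_modulus_mult by (metis mult.commute)
    moreover have "[2 * x + w = 2 * x] (mod w)"
      by (simp add: cong_iff_dvd_diff)
    ultimately show "[2 * x = d] (mod w)"
      using cong_sym cong_trans by blast
  next
    assume "[2 * x = d] (mod w)"
    then have "w dvd (2 * x - d) + w"
      by (simp add: cong_iff_dvd_diff)
    then have "w dvd 2 * x + w - d"
      by (simp add: algebra_simps)
    moreover have "2 dvd 2 * x + w - d"
      using assms(1) that by simp
    moreover have "coprime 2 w"
      using assms(1) by simp
    ultimately show "[2 * x + w = d] (mod 2 * w)"
      unfolding cong_iff_dvd_diff by (simp add: divides_mult)
  qed
  then show ?thesis
    using assms(2) unfolding cong_pm_def by simp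
qed

lemma cong_pm_mult_inverse_iff:
  fixes a b n c w :: int
  assumes "[a * b = 1] (mod w) \<or> [a * b = - 1] (mod w)"
  shows "cong_pm (a * n) c w \<longleftrightarrow> cong_pm n (c * b) w"
proof -
  obtain e where e: "e = 1 \<or> e = - 1" "[a * b = e] (mod w)"
    using assms by blast
  have e_sq: "e * e = 1"
    using e(1) by auto
  have solve: "[a * n = d] (mod w) \<longleftrightarrow> [n = e * d * b] (mod w)" for d
  proof
    assume "[a * n = d] (mod w)"
    then have "[(a * b) * n = d * b] (mod w)"
      using cong_scalar_right[of "a * n" d w b] by (simp add: ac_simps)
    moreover have "[(a * b) * n = e * n] (mod w)"
      using cong_scalar_right[OF e(2)] .
    ultimately have "[e * (e * n) = e * (d * b)] (mod w)"
      using cong_sym cong_trans cong_scalar_left by blast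
    then show "[n = e * d * b] (mod w)"
      by (simp add: e_sq flip: mult.assoc)
  next
    assume "[n = e * d * b] (mod w)"
    then have "[a * n = e * d * (a * b)] (mod w)"
      using cong_scalar_left[of n "e * d * b" w a] by (simp add: ac_simps)
    moreover have "[e * d * (a * b) = e * d * e] (mod w)"
      using cong_scalar_left[OF e(2)] .
    ultimately show "[a * n = d] (mod w)"
      using cong_trans by (metis e_sq mult.commute mult.left_commute mult_1)
  qed
  show ?thesis
    unfolding cong_pm_def solve using e(1) by auto
qed

lemma capacity_V_eq:
  "capacity_V p q n = \<bar>of_int (omega p q) * rep2 (of_int (4 * int p * n) / of_int (omega p q))\<bar>"
proof -
  have "(SOME z. z \<in> vline n) \<in> vline n"
    by (rule someI[of _ "(of_int n, 0)"]) (simp add: vline_def)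
  then have "fst (SOME z. z \<in> vline n) = of_int n"
    by (auto simp: vline_def)
  then show ?thesis
    unfolding capacity_V_def Let_def F_V_def PP_def omega_def by simp
qed

lemma capacity_H_eq:
  "capacity_H p q n = \<bar>of_int (omega p q) * rep2 (of_int (4 * int p * n) / of_int (omega p q))\<bar>"
proof -
  have "(SOME z. z \<in> hline n) \<in> hline n"
    by (rule someI[of _ "(0, of_int n)"]) (simp add: hline_def)
  then have "snd (SOME z. z \<in> hline n) = of_int n"
    by (auto simp: hline_def)
  then show ?thesis
    unfolding capacity_H_def Let_def F_H_def PP_def omega_def by simp
qed

lemma PP_mult_add_one:
  assumes "0 < p + q"
  shows "PP p q * of_int n + 1 = of_int (2 * int p * n + omega p q) / of_int (omega p q)"
proof -
  have "real p + real q \<noteq> 0"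
    using assms by linarith
  then show ?thesis
    by (simp add: PP_def omega_def field_simps)
qed

lemma mass_P_eq:
  assumes "0 < p + q"
  shows "mass_P p q n
    = \<bar>of_int (omega p q) * rep2 (of_int (2 * int p * n + omega p q) / of_int (omega p q))\<bar>"
proof -
  have "(SOME z. z \<in> pline p q n) \<in> pline p q n"
    by (rule someI[of _ "(0, of_int n)"]) (simp add: pline_def)
  then have "snd (SOME z. z \<in> pline p q n) = of_int n - PP p q * fst (SOME z. z \<in> pline p q n)"
    by (auto simp: pline_def)
  moreover have "PP p q * (of_int n - PP p q * x) + (PP p q)\<^sup>2 * x + 1 = PP p q * of_int n + 1" for x
    by (simp add: algebra_simps power2_eq_square)
  ultimately show ?thesis
    unfolding mass_P_def Let_def F_P_def PP_mult_add_one[OF assms] by simp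
qed

lemma mass_Q_eq:
  assumes "0 < p + q"
  shows "mass_Q p q n
    = \<bar>of_int (omega p q) * rep2 (of_int (2 * int p * n + omega p q) / of_int (omega p q))\<bar>"
proof -
  have "(SOME z. z \<in> qline p q n) \<in> qline p q n"
    by (rule someI[of _ "(0, of_int n)"]) (simp add: qline_def)
  then have "snd (SOME z. z \<in> qline p q n) = of_int n - QQ p q * fst (SOME z. z \<in> qline p q n)"
    by (auto simp: qline_def)
  moreover have "PP p q * (of_int n - QQ p q * x) + PP p q * QQ p q * x + 1 = PP p q * of_int n + 1" for x
    by (simp add: algebra_simps)
  ultimately show ?thesis
    unfolding mass_Q_def Let_def F_Q_def PP_mult_add_one[OF assms] by simp
qed

lemma omega_pos: "even_rational_param p q \<Longrightarrow> 0 < omega p q"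
  unfolding even_rational_param_def omega_def by simp

lemma omega_odd:
  assumes "even_rational_param p q"
  shows "odd (omega p q)"
proof
  assume "even (omega p q)"
  then have "even (p + q)"
    unfolding omega_def by (metis even_of_nat of_nat_add)
  moreover have "coprime p q" "even p \<or> even q"
    using assms unfolding even_rational_param_def by auto
  ultimately show False
    by (metis coprime_common_divisor even_add odd_one)
qed

lemma capacity_line_iff:
  fixes p q :: nat and \<alpha> k n :: int
  assumes "even_rational_param p q"
    and "[2 * \<alpha> * int p = 1] (mod omega p q) \<or> [2 * \<alpha> * int p = -1] (mod omega p q)"
    and "0 \<le> k" "2 * k \<le> omega p q"
  shows "\<bar>of_int (omega p q) * rep2 (of_int (4 * int p * n) / of_int (omega p q))\<bar> = of_int (2 * k)
    \<longleftrightarrow> cong_pm n (k * \<alpha>) (omega p q)"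
proof -
  from omega_pos[OF assms(1)] have "\<bar>of_int (omega p q) * rep2 (of_int (4 * int p * n) / of_int (omega p q))\<bar> = of_int (2 * k)
      \<longleftrightarrow> cong_pm (2 * (2 * int p * n)) (2 * k) (2 * omega p q)"
    using abs_rep2_scaled_eq_iff[of "omega p q" "2 * k" "4 * int p * n"] assms(3,4)
    by (simp add: mult.assoc)
  also have "\<dots> \<longleftrightarrow> cong_pm (2 * int p * n) k (omega p q)"
    by (rule cong_pm_double_iff)
  also have "\<dots> \<longleftrightarrow> cong_pm n (k * \<alpha>) (omega p q)"
    using cong_pm_mult_inverse_iff[of "2 * int p" \<alpha> "omega p q" n k] assms(2) by (simp add: ac_simps)
  finally show ?thesis .
qed

lemma mass_line_iff:
  fixes p q :: nat and \<alpha> k n :: int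
  assumes "even_rational_param p q"
    and "[2 * \<alpha> * int p = 1] (mod omega p q) \<or> [2 * \<alpha> * int p = -1] (mod omega p q)"
    and "odd k" "1 \<le> k" "k \<le> omega p q"
  shows "\<bar>of_int (omega p q) * rep2 (of_int (2 * int p * n + omega p q) / of_int (omega p q))\<bar> = of_int k
    \<longleftrightarrow> cong_pm n (k * \<alpha>) (omega p q)"
proof -
  from omega_pos[OF assms(1)] have "\<bar>of_int (omega p q) * rep2 (of_int (2 * int p * n + omega p q) / of_int (omega p q))\<bar>
      = of_int k \<longleftrightarrow> cong_pm (2 * (int p * n) + omega p q) k (2 * omega p q)"
    using abs_rep2_scaled_eq_iff[of "omega p q" k "2 * int p * n + omega p q"] assms(4,5)
    by (simp add: ac_simps)
  also have "\<dots> \<longleftrightarrow> cong_pm ((2 * int p) * n) k (omega p q)"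
    using cong_pm_add_odd_modulus_iff[OF omega_odd[OF assms(1)] assms(3), of "int p * n"]
    by (simp add: mult.assoc)
  also have "\<dots> \<longleftrightarrow> cong_pm n (k * \<alpha>) (omega p q)"
    using cong_pm_mult_inverse_iff[of "2 * int p" \<alpha>] assms(2) by (simp add: ac_simps)
  finally show ?thesis .
qed

theorem lemma2p2:
  fixes p q :: nat and \<alpha> :: int
  assumes "even_rational_param p q"
    and "0 < \<alpha>" and "2 * \<alpha> < omega p q"
    and "[2 * \<alpha> * int p = 1] (mod omega p q) \<or> [2 * \<alpha> * int p = -1] (mod omega p q)"
  shows "(\<forall>k::int. 0 \<le> k \<and> k \<le> (omega p q - 1) div 2 \<longrightarrow>
            (\<forall>n::int. capacity_V p q n = of_int (2 * k) \<longleftrightarrow>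
               [n = k * \<alpha>] (mod omega p q) \<or> [n = omega p q - k * \<alpha>] (mod omega p q)) \<and>
            (\<forall>n::int. capacity_H p q n = of_int (2 * k) \<longleftrightarrow>
               [n = k * \<alpha>] (mod omega p q) \<or> [n = omega p q - k * \<alpha>] (mod omega p q)))
       \<and> (\<forall>k::int. odd k \<and> 1 \<le> k \<and> k \<le> omega p q \<longrightarrow>
            (\<forall>n::int. mass_P p q n = of_int k \<longleftrightarrow>
               [n = k * \<alpha>] (mod omega p q) \<or> [n = omega p q - k * \<alpha>] (mod omega p q)) \<and>
            (\<forall>n::int. mass_Q p q n = of_int k \<longleftrightarrow>
               [n = k * \<alpha>] (mod omega p q) \<or> [n = omega p q - k * \<alpha>] (mod omega p q)))"
  \<comment> \<open>\<open>0 < \<alpha>\<close> and \<open>2\<alpha> < \<omega>\<close> only make \<open>\<alpha>\<close> unique; the congruence alone suffices.\<close>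
proof -
  have pq: "0 < p + q"
    using assms(1) unfolding even_rational_param_def by simp
  have pm: "[n = k * \<alpha>] (mod omega p q) \<or> [n = omega p q - k * \<alpha>] (mod omega p q)
      \<longleftrightarrow> cong_pm n (k * \<alpha>) (omega p q)" for n k
    unfolding cong_pm_def by (simp add: cong_def)
  show ?thesis
    unfolding pm capacity_V_eq capacity_H_eq mass_P_eq[OF pq] mass_Q_eq[OF pq]
    using capacity_line_iff[OF assms(1,4)] mass_line_iff[OF assms(1,4)] by auto
qed

end
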